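(* Let $G$ be a bipartite graph with $n$ vertices and $m$ edges, and let $\eta$ be the nullity of $G$. Then $$S_{k}(A(G))\leq \begin{cases} \sqrt{km}, & \text{if } 1\leq k \leq \left\lfloor\frac{n-\eta}{2}\right\rfloor;\\ \sqrt{\left\lfloor\frac{n-\eta}{2}\right\rfloor m}, & \text{if } \left\lfloor\frac{n-\eta}{2}\right\rfloor< k \leq \left\lfloor\frac{n+\eta}{2}\right\rfloor;\\ \sqrt{(n-k)m}, & \text{if } \left\lfloor\frac{n+\eta}{2}\right\rfloor< k \leq n. \end{cases}$$
   Context: All graphs are simple and undirected. $A(G)$ is the adjacency matrix. The nullity of $G$ is the multiplicity of the eigenvalue $0$ of $A(G)$. For a real symmetric matrix $M$ with eigenvalues $\lambda_1(M)\geq\cdots\geq\lambda_n(M)$, $S_k(M)=\sum_{i=1}^k\lambda_i(M)$. *)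

theory Defs
  imports "Jordan_Normal_Form.Char_Poly" "HOL-Library.Multiset"
begin

definition simple_graph :: "nat \<Rightarrow> (nat \<Rightarrow> nat \<Rightarrow> bool) \<Rightarrow> bool" where
  "simple_graph n E \<longleftrightarrow> (\<forall>i j. E i j \<longrightarrow> i < n \<and> j < n \<and> i \<noteq> j) \<and> (\<forall>i j. E i j \<longrightarrow> E j i)"

definition bipartite :: "nat \<Rightarrow> (nat \<Rightarrow> nat \<Rightarrow> bool) \<Rightarrow> bool" where
  "bipartite n E \<longleftrightarrow> (\<exists>X. X \<subseteq> {0..<n} \<and> (\<forall>i j. E i j \<longrightarrow> (i \<in> X \<longleftrightarrow> j \<notin> X)))"

definition num_edges :: "nat \<Rightarrow> (nat \<Rightarrow> nat \<Rightarrow> bool) \<Rightarrow> nat" where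
  "num_edges n E = card {{i, j} | i j. i < n \<and> j < n \<and> E i j}"

definition adj_matrix :: "nat \<Rightarrow> (nat \<Rightarrow> nat \<Rightarrow> bool) \<Rightarrow> real mat" where
  "adj_matrix n E = mat n n (\<lambda>(i, j). if E i j then 1 else 0)"

definition eig_mset :: "real mat \<Rightarrow> real multiset" where
  "eig_mset A = (\<Sum>x\<in>{x. poly (char_poly A) x = 0}. replicate_mset (order x (char_poly A)) x)"

definition eigenvalues_desc :: "real mat \<Rightarrow> real list" where
  "eigenvalues_desc A = rev (sorted_list_of_multiset (eig_mset A))"

definition S_k :: "nat \<Rightarrow> real mat \<Rightarrow> real" where
  "S_k k A = sum_list (take k (eigenvalues_desc A))"

definition nullity :: "nat \<Rightarrow> (nat \<Rightarrow> nat \<Rightarrow> bool) \<Rightarrow> nat" where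
  "nullity n E = count (eig_mset (adj_matrix n E)) 0"

end

(*
  The adjacency matrix A is real symmetric, so its spectrum is real, and its eigenvalues
  satisfy  sum lambda_i^2 = tr A^2 = 2m  (computed on a Schur triangularisation).  If G is
  bipartite, conjugating by the diagonal +-1 matrix of a bipartition turns A into -A, so the
  spectrum is symmetric about 0.  Hence the positive eigenvalues are (n - eta)/2 in number and
  their squares sum to m.  A sum of k eigenvalues is at most the sum of its positive terms,
  which by Cauchy-Schwarz is at most sqrt (k m) and at most sqrt ((n - eta)/2 * m); since
  the whole spectrum sums to 0, the k largest eigenvalues also sum to minus the n - k
  smallest, giving sqrt ((n - k) m).  All three bounds hold for every k.
*)
theory Submission
  imports Defs "Jordan_Normal_Form.Schur_Decomposition" "HOL-Analysis.Convex"
begin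

lemma sum_mset_le_sqrt:
  fixes M :: "real multiset"
  assumes "(\<Sum>x\<in>#M. x\<^sup>2) \<le> c" and "real (size M) \<le> K"
  shows "\<Sum>\<^sub># M \<le> sqrt (K * c)"
proof -
  obtain xs where M: "M = mset xs" by (metis ex_mset)
  let ?I = "{..<length xs}"
  have sum: "\<Sum>\<^sub># M = (\<Sum>i\<in>?I. xs ! i)"
    and squares: "(\<Sum>x\<in>#M. x\<^sup>2) = (\<Sum>i\<in>?I. (xs ! i)\<^sup>2)"
    unfolding M sum_mset_sum_list mset_map[symmetric]
    by (simp_all add: sum_list_sum_nth atLeast0LessThan)
  have "(\<Sum>\<^sub># M)\<^sup>2 \<le> (\<Sum>x\<in>#M. x\<^sup>2) * real (size M)"
    unfolding sum squares using sum_squared_le_sum_of_squares[of "nth xs" ?I] by (simp add: M)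
  also have "\<dots> \<le> c * K"
  proof (rule mult_mono)
    have "0 \<le> (\<Sum>x\<in>#M. x\<^sup>2)" unfolding squares by (simp add: sum_nonneg)
    then show "0 \<le> c" using assms(1) by linarith
  qed (use assms in auto)
  finally have "(\<Sum>\<^sub># M)\<^sup>2 \<le> K * c" by (simp add: mult.commute)
  then show ?thesis
    using real_le_rsqrt by blast
qed

lemma sum_mset_le_sqrt_positive:
  fixes T :: "real multiset"
  assumes "(\<Sum>x\<in>#{#x \<in># T. 0 < x#}. x\<^sup>2) \<le> c" and "real (size {#x \<in># T. 0 < x#}) \<le> K"
  shows "\<Sum>\<^sub># T \<le> sqrt (K * c)"
proof -
  have "\<Sum>\<^sub># T = \<Sum>\<^sub># {#x \<in># T. 0 < x#} + \<Sum>\<^sub># {#x \<in># T. \<not> 0 < x#}"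
    by (metis multiset_partition sum_mset.union)
  moreover have "\<Sum>\<^sub># {#x \<in># T. \<not> 0 < x#} \<le> 0"
    by (induction T) auto
  moreover have "\<Sum>\<^sub># {#x \<in># T. 0 < x#} \<le> sqrt (K * c)"
    using assms by (rule sum_mset_le_sqrt)
  ultimately show ?thesis by linarith
qed

lemma sum_mset_mono_subseteq:
  fixes f :: "'a \<Rightarrow> 'b::ordered_comm_monoid_add"
  assumes "A \<subseteq># B" and "\<And>x. 0 \<le> f x"
  shows "(\<Sum>x\<in>#A. f x) \<le> (\<Sum>x\<in>#B. f x)"
proof -
  obtain C where B: "B = A + C"
    using assms(1) by (metis subset_mset.le_iff_add)
  have "0 \<le> (\<Sum>x\<in>#C. f x)"
    using sum_mset_mono[of C "\<lambda>_. 0" f] assms(2) by simp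
  then show ?thesis
    unfolding B by (simp add: add_increasing2)
qed

lemma sum_mset_image_uminus:
  "\<Sum>\<^sub># (image_mset uminus M) = - \<Sum>\<^sub># (M :: 'a::ab_group_add multiset)"
  by (induction M) auto

lemma sum_mset_eq_0_if_symmetric:
  fixes M :: "real multiset"
  assumes "image_mset uminus M = M"
  shows "\<Sum>\<^sub># M = 0"
  using sum_mset_image_uminus[of M] assms by simp

lemma symmetric_mset_positive_part:
  fixes M :: "real multiset"
  assumes symm: "image_mset uminus M = M"
  shows "(\<Sum>x\<in>#{#x \<in># M. 0 < x#}. x\<^sup>2) = (\<Sum>x\<in>#M. x\<^sup>2) / 2"
    and "size {#x \<in># M. 0 < x#} = (size M - count M 0) div 2"
proof -
  let ?P = "{#x \<in># M. 0 < x#}"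
  have neg: "{#x \<in># M. x < 0#} = image_mset uminus ?P"
    using filter_mset_image_mset[of "\<lambda>x. x < 0" uminus M] symm by simp
  have split: "M = ?P + image_mset uminus ?P + replicate_mset (count M 0) 0"
    unfolding neg[symmetric] filter_eq_replicate_mset[symmetric]
    by (intro multiset_eqI) auto
  have "(\<Sum>x\<in>#M. x\<^sup>2) = (\<Sum>x\<in>#?P. x\<^sup>2) + (\<Sum>x\<in>#?P. x\<^sup>2)"
    by (subst split) (simp add: multiset.map_comp o_def)
  then show "(\<Sum>x\<in>#?P. x\<^sup>2) = (\<Sum>x\<in>#M. x\<^sup>2) / 2" by linarith
  have "size M = 2 * size ?P + count M 0"
    by (subst split) simp
  then show "size ?P = (size M - count M 0) div 2" by simp
qed

lemma sum_submset_symmetric_le: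
  fixes M T :: "real multiset"
  assumes symm: "image_mset uminus M = M" and squares: "(\<Sum>x\<in>#M. x\<^sup>2) \<le> 2 * c"
    and sub: "T \<subseteq># M"
  shows "\<Sum>\<^sub># T \<le> sqrt (real (size T) * c)"
    and "\<Sum>\<^sub># T \<le> sqrt (real ((size M - count M 0) div 2) * c)"
proof -
  have sub_pos: "{#x \<in># T. 0 < x#} \<subseteq># {#x \<in># M. 0 < x#}"
    using sub by (rule multiset_filter_mono)
  have "(\<Sum>x\<in>#{#x \<in># T. 0 < x#}. x\<^sup>2) \<le> (\<Sum>x\<in>#{#x \<in># M. 0 < x#}. x\<^sup>2)"
    using sub_pos by (rule sum_mset_mono_subseteq) simp
  also have "\<dots> \<le> c"
    using squares symmetric_mset_positive_part(1)[OF symm] by simp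
  finally have pos_squares: "(\<Sum>x\<in>#{#x \<in># T. 0 < x#}. x\<^sup>2) \<le> c" .
  show "\<Sum>\<^sub># T \<le> sqrt (real (size T) * c)"
    using pos_squares by (rule sum_mset_le_sqrt_positive) simp
  show "\<Sum>\<^sub># T \<le> sqrt (real ((size M - count M 0) div 2) * c)"
    using pos_squares size_mset_mono[OF sub_pos] symmetric_mset_positive_part(2)[OF symm]
    by (intro sum_mset_le_sqrt_positive) simp_all
qed

lemma sum_submset_symmetric_le_complement:
  fixes M T :: "real multiset"
  assumes symm: "image_mset uminus M = M" and squares: "(\<Sum>x\<in>#M. x\<^sup>2) \<le> 2 * c"
    and sub: "T \<subseteq># M"
  shows "\<Sum>\<^sub># T \<le> sqrt (real (size M - size T) * c)"
proof -
  let ?R = "image_mset uminus (M - T)"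
  have "\<Sum>\<^sub># T = - \<Sum>\<^sub># (M - T)"
    using sum_mset_eq_0_if_symmetric[OF symm] sum_mset_diff[OF sub] by simp
  also have "\<dots> = \<Sum>\<^sub># ?R"
    by (rule sum_mset_image_uminus[symmetric])
  finally have "\<Sum>\<^sub># T = \<Sum>\<^sub># ?R" .
  moreover have "?R \<subseteq># M"
    using image_mset_subseteq_mono[of "M - T" M uminus] symm by simp
  moreover have "size ?R = size M - size T"
    using sub by (simp add: size_Diff_submset)
  ultimately show ?thesis
    using sum_submset_symmetric_le(1)[OF symm squares] by metis
qed

lemma eigenvalue_of_real_symmetric_is_real:
  fixes A :: "real mat"
  assumes A: "A \<in> carrier_mat n n" and sym: "transpose_mat A = A"
    and ev: "eigenvalue (map_mat complex_of_real A) a"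
  shows "a \<in> \<real>"
proof -
  let ?C = "map_mat complex_of_real A"
  have C: "?C \<in> carrier_mat n n" "transpose_mat ?C = ?C"
    using A sym by (auto simp: map_mat_transpose)
  obtain v where v: "v \<in> carrier_vec n" "v \<noteq> 0\<^sub>v n" "?C *\<^sub>v v = a \<cdot>\<^sub>v v"
    using ev C unfolding eigenvalue_def eigenvector_def by auto
  have C_real: "conjugate (?C *\<^sub>v v) = ?C *\<^sub>v conjugate v"
    using A v(1) by (intro eq_vecI) (auto simp: scalar_prod_def sum_conjugate conjugate_dist_mul)
  have "a * (conjugate v \<bullet> v) = conjugate v \<bullet> (?C *\<^sub>v v)"
    using v by simp
  also have "\<dots> = (?C *\<^sub>v conjugate v) \<bullet> v"
    using transpose_vec_mult_scalar[OF C(1) v(1), of "conjugate v"] C(2) v(1) by simp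
  also have "\<dots> = cnj a * (conjugate v \<bullet> v)"
    using v by (simp flip: C_real add: conjugate_smult_vec)
  finally have "a * (conjugate v \<bullet> v) = cnj a * (conjugate v \<bullet> v)" .
  moreover have "conjugate v \<bullet> v \<noteq> 0"
    using v conjugate_vec_sprod_comm[OF v(1) v(1)] by auto
  ultimately show ?thesis
    by (simp add: Reals_cnj_iff)
qed

lemma char_poly_real_symmetric_factorized:
  fixes A :: "real mat"
  assumes A: "A \<in> carrier_mat n n" and sym: "transpose_mat A = A"
  obtains es where "length es = n" and "char_poly A = (\<Prod>e\<leftarrow>es. [:-e, 1:])"
proof -
  interpret of_real_poly: map_poly_inj_idom_hom complex_of_real ..
  let ?C = "map_mat complex_of_real A"
  have C: "?C \<in> carrier_mat n n" using A by simp
  obtain as where as: "char_poly ?C = (\<Prod>a\<leftarrow>as. [:-a, 1:])" "length as = n"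
    using char_poly_factorized[OF C] by blast
  have "a \<in> \<real>" if "a \<in> set as" for a
  proof (rule eigenvalue_of_real_symmetric_is_real[OF A sym])
    have "poly (char_poly ?C) a = 0"
      using that unfolding as(1) by (auto simp: poly_prod_list_zero_iff)
    then show "eigenvalue ?C a" using eigenvalue_root_char_poly[OF C] by simp
  qed
  then have "map_poly complex_of_real (\<Prod>e\<leftarrow>map Re as. [:-e, 1:]) = char_poly ?C"
    unfolding as(1) of_real_poly.hom_prod_list
    by (intro arg_cong[where f = prod_list]) (auto simp: of_real_Re)
  also have "char_poly ?C = map_poly complex_of_real (char_poly A)"
    by (rule of_real_hom.char_poly_hom[OF A])
  finally have "char_poly A = (\<Prod>e\<leftarrow>map Re as. [:-e, 1:])"
    by simp
  with as(2) show ?thesis using that[of "map Re as"] by simp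
qed

lemma order_prod_linear_factors:
  fixes es :: "'a::idom list"
  shows "Polynomial.order x (\<Prod>e\<leftarrow>es. [:-e, 1:]) = count (mset es) x"
proof (induction es)
  case (Cons e es)
  let ?p = "\<Prod>e\<leftarrow>es. [:-e, 1:]"
  have "Polynomial.order x ([:-e, 1:] * ?p) = Polynomial.order x [:-e, 1:] + Polynomial.order x ?p"
    by (intro order_mult no_zero_divisors) (auto simp: prod_list_zero_iff)
  moreover have "Polynomial.order x [:-e, 1:] = (if x = e then 1 else 0)"
    using order_power_n_n[of e 1] by (auto intro: order_0I)
  ultimately show ?case using Cons by simp
qed simp

lemma eig_mset_linear_factors:
  assumes "char_poly A = (\<Prod>e\<leftarrow>es. [:-e, 1:])"
  shows "eig_mset A = mset es"
proof (rule multiset_eqI)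
  fix y
  have roots: "{x. poly (char_poly A) x = 0} = set es"
    unfolding assms by (auto simp: poly_prod_list_zero_iff)
  show "count (eig_mset A) y = count (mset es) y"
    unfolding eig_mset_def roots unfolding assms
    by (simp add: count_sum order_prod_linear_factors not_in_iff)
qed

definition trace :: "'a::comm_monoid_add mat \<Rightarrow> 'a" where
  "trace A = (\<Sum>i = 0..<dim_row A. A $$ (i, i))"

lemma trace_mult_comm:
  fixes A :: "'a::comm_semiring_0 mat"
  assumes "A \<in> carrier_mat n m" and "B \<in> carrier_mat m n"
  shows "trace (A * B) = trace (B * A)"
proof -
  have "trace (A * B) = (\<Sum>i = 0..<n. \<Sum>k = 0..<m. A $$ (i, k) * B $$ (k, i))"
    using assms by (simp add: trace_def scalar_prod_def)
  also have "\<dots> = (\<Sum>k = 0..<m. \<Sum>i = 0..<n. B $$ (k, i) * A $$ (i, k))"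
    by (subst sum.swap) (simp add: ac_simps)
  also have "\<dots> = trace (B * A)"
    using assms by (simp add: trace_def scalar_prod_def)
  finally show ?thesis .
qed

lemma trace_similar_mat_wit:
  fixes A :: "'a::comm_ring_1 mat"
  assumes "similar_mat_wit A B P Q"
  shows "trace A = trace B"
proof -
  define n where "n = dim_row A"
  note wit = similar_mat_witD[OF n_def assms]
  have "trace A = trace (P * (B * Q))"
    using wit by (simp add: assoc_mult_mat[of P n n B n Q n])
  also have "\<dots> = trace (B * Q * P)"
    using wit by (intro trace_mult_comm[of _ n n]) auto
  also have "\<dots> = trace B"
    using wit by (simp add: assoc_mult_mat[of B n n Q n P n])
  finally show ?thesis .
qed

lemma trace_square_upper_triangular:
  fixes B :: "'a::comm_semiring_1 mat"
  assumes "B \<in> carrier_mat n n" and "upper_triangular B"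
  shows "trace (B * B) = (\<Sum>i = 0..<n. (B $$ (i, i))\<^sup>2)"
proof -
  have "trace (B * B) = (\<Sum>i = 0..<n. \<Sum>k = 0..<n. B $$ (i, k) * B $$ (k, i))"
    using assms(1) by (simp add: trace_def scalar_prod_def)
  also have "\<dots> = (\<Sum>i = 0..<n. \<Sum>k = 0..<n. if k = i then (B $$ (i, i))\<^sup>2 else 0)"
  proof (intro sum.cong refl)
    fix i k assume "i \<in> {0..<n}" "k \<in> {0..<n}"
    then show "B $$ (i, k) * B $$ (k, i) = (if k = i then (B $$ (i, i))\<^sup>2 else 0)"
      using assms by (cases i k rule: linorder_cases)
        (auto simp: power2_eq_square upper_triangular_def)
  qed
  finally show ?thesis by simp
qed

lemma similar_upper_triangular_diag:
  fixes A :: "'a::conjugatable_ordered_field mat"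
  assumes A: "A \<in> carrier_mat n n" and cp: "char_poly A = (\<Prod>e\<leftarrow>es. [:-e, 1:])"
  obtains B P Q where "similar_mat_wit A B P Q" and "B \<in> carrier_mat n n"
    and "upper_triangular B" and "diag_mat B = es"
proof -
  obtain B P Q where "schur_decomposition A es = (B, P, Q)"
    by (cases "schur_decomposition A es") auto
  from schur_decomposition[OF A cp this] similar_mat_witD2[OF A] show ?thesis
    using that by blast
qed

lemma eig_mset_uminus:
  fixes A :: "real mat"
  assumes A: "A \<in> carrier_mat n n" and cp: "char_poly A = (\<Prod>e\<leftarrow>es. [:-e, 1:])"
  shows "eig_mset (- A) = image_mset uminus (eig_mset A)"
proof -
  obtain B P Q where wit: "similar_mat_wit A B P Q" and carrier: "B \<in> carrier_mat n n"
    and B: "upper_triangular B" "diag_mat B = es"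
    using similar_upper_triangular_diag[OF A cp] .
  have "similar_mat_wit ((-1) \<cdot>\<^sub>m A) ((-1) \<cdot>\<^sub>m B) P Q"
    by (rule similar_mat_wit_smult[OF wit])
  moreover have "(-1) \<cdot>\<^sub>m M = - M" for M :: "real mat"
    by (intro eq_matI) auto
  ultimately have "char_poly (- A) = char_poly (- B)"
    by (intro char_poly_similar) (auto simp: similar_mat_def)
  also have "\<dots> = (\<Prod>e\<leftarrow>diag_mat (- B). [:-e, 1:])"
    using carrier B(1) by (intro char_poly_upper_triangular) (auto simp: upper_triangular_def)
  also have "diag_mat (- B) = map uminus es"
    using carrier B(2) by (auto simp: diag_mat_def)
  finally have "eig_mset (- A) = mset (map uminus es)"
    by (rule eig_mset_linear_factors)
  then show ?thesis
    using eig_mset_linear_factors[OF cp] by simp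
qed

lemma sum_squares_eig_mset:
  fixes A :: "real mat"
  assumes A: "A \<in> carrier_mat n n" and cp: "char_poly A = (\<Prod>e\<leftarrow>es. [:-e, 1:])"
  shows "(\<Sum>x\<in>#eig_mset A. x\<^sup>2) = trace (A * A)"
proof -
  obtain B P Q where wit: "similar_mat_wit A B P Q" and carrier: "B \<in> carrier_mat n n"
    and B: "upper_triangular B" "diag_mat B = es"
    using similar_upper_triangular_diag[OF A cp] .
  have "similar_mat_wit (A ^\<^sub>m 2) (B ^\<^sub>m 2) P Q"
    by (rule similar_mat_wit_pow[OF wit])
  then have "trace (A * A) = trace (B * B)"
    using A carrier by (simp add: numeral_2_eq_2 trace_similar_mat_wit)
  also have "\<dots> = (\<Sum>i = 0..<n. (B $$ (i, i))\<^sup>2)"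
    by (rule trace_square_upper_triangular[OF carrier B(1)])
  also have "\<dots> = (\<Sum>e\<leftarrow>es. e\<^sup>2)"
    using carrier unfolding B(2)[symmetric] diag_mat_def
    by (simp add: sum_list_sum_nth atLeast0LessThan)
  finally show ?thesis
    unfolding eig_mset_linear_factors[OF cp] mset_map[symmetric] sum_mset_sum_list ..
qed

lemma transpose_adj_matrix:
  assumes "simple_graph n E"
  shows "transpose_mat (adj_matrix n E) = adj_matrix n E"
  using assms unfolding simple_graph_def adj_matrix_def by (intro eq_matI) auto

lemma card_directed_edges_le: "card {(i, k). i < n \<and> k < n \<and> E i k} \<le> 2 * num_edges n E"
proof -
  let ?edges = "{{i, j} | i j. i < n \<and> j < n \<and> E i j}"
  let ?up = "{(i, k). i < n \<and> k < n \<and> E i k \<and> i \<le> k}"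
  let ?down = "{(i, k). i < n \<and> k < n \<and> E i k \<and> k < i}"
  have fin: "finite ?edges" "finite ?up" "finite ?down"
    by (rule finite_subset[of _ "Pow {0..<n}"] finite_subset[of _ "{0..<n} \<times> {0..<n}"]; auto)+
  have "card ?up \<le> card ?edges" "card ?down \<le> card ?edges"
    by (rule card_inj_on_le[where f = "\<lambda>(i, k). {i, k}", OF _ _ fin(1)];
        auto simp: inj_on_def doubleton_eq_iff)+
  moreover have "card {(i, k). i < n \<and> k < n \<and> E i k} \<le> card ?up + card ?down"
    by (rule order_trans[OF card_mono card_Un_le]) (use fin in auto)
  ultimately show ?thesis unfolding num_edges_def by linarith
qed

lemma trace_adj_matrix_square_le:
  "trace (adj_matrix n E * adj_matrix n E) \<le> 2 * real (num_edges n E)"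
proof -
  let ?A = "adj_matrix n E"
  have "trace (?A * ?A) = (\<Sum>i = 0..<n. \<Sum>k = 0..<n. ?A $$ (i, k) * ?A $$ (k, i))"
    by (simp add: trace_def scalar_prod_def adj_matrix_def)
  also have "\<dots> \<le> (\<Sum>(i, k)\<in>{0..<n} \<times> {0..<n}. if E i k then 1 else 0)"
    unfolding sum.cartesian_product[symmetric] by (intro sum_mono) (auto simp: adj_matrix_def)
  also have "\<dots> = real (card {(i, k). i < n \<and> k < n \<and> E i k})"
    by (simp add: case_prod_beta sum.If_cases) (rule arg_cong[where f = card]; auto)
  also have "\<dots> \<le> 2 * real (num_edges n E)"
    using card_directed_edges_le[of n E] by simp
  finally show ?thesis .
qed

lemma adj_matrix_similar_uminus:
  assumes "bipartite n E"
  shows "similar_mat (adj_matrix n E) (- adj_matrix n E)"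
proof -
  let ?A = "adj_matrix n E"
  obtain X where X: "\<And>i j. E i j \<Longrightarrow> i \<in> X \<longleftrightarrow> j \<notin> X"
    using assms unfolding bipartite_def by blast
  define s where "s i = (if i \<in> X then 1 else -1 :: real)" for i
  define D where "D = mat_diag n s"
  have "(\<lambda>i. s i * s i) = (\<lambda>_. 1)"
    by (simp add: s_def fun_eq_iff)
  then have D: "D \<in> carrier_mat n n" "D * D = 1\<^sub>m n"
    unfolding D_def by simp_all
  have A: "?A \<in> carrier_mat n n" by (simp add: adj_matrix_def)
  have "D * (- ?A) * D = ?A"
    using A unfolding D_def
    by (simp add: mat_diag_mult_left[of _ n n] mat_diag_mult_right[of _ n n])
      (intro eq_matI; auto simp: s_def adj_matrix_def dest: X)
  then show ?thesis
    using D by (intro similar_matI[of _ _ D D n]) (auto simp: adj_matrix_def)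
qed

lemma adj_matrix_spectrum:
  assumes "simple_graph n E" and "bipartite n E"
  defines "A \<equiv> adj_matrix n E"
  shows "size (eig_mset A) = n"
    and "image_mset uminus (eig_mset A) = eig_mset A"
    and "(\<Sum>x\<in>#eig_mset A. x\<^sup>2) \<le> 2 * real (num_edges n E)"
proof -
  have A: "A \<in> carrier_mat n n" by (simp add: A_def adj_matrix_def)
  obtain es where es: "length es = n" "char_poly A = (\<Prod>e\<leftarrow>es. [:-e, 1:])"
    using char_poly_real_symmetric_factorized[OF A] transpose_adj_matrix[OF assms(1)]
    unfolding A_def by blast
  show "size (eig_mset A) = n"
    using es by (simp add: eig_mset_linear_factors)
  have "char_poly (- A) = char_poly A"
    using char_poly_similar[OF adj_matrix_similar_uminus[OF assms(2)]] unfolding A_def ..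
  then show "image_mset uminus (eig_mset A) = eig_mset A"
    using eig_mset_uminus[OF A es(2)] by (simp add: eig_mset_def)
  show "(\<Sum>x\<in>#eig_mset A. x\<^sup>2) \<le> 2 * real (num_edges n E)"
    using sum_squares_eig_mset[OF A es(2)] trace_adj_matrix_square_le[of n E]
    unfolding A_def by simp
qed

theorem theorem4p1:
  fixes n k :: nat and E :: "nat \<Rightarrow> nat \<Rightarrow> bool"
  assumes "simple_graph n E" and "bipartite n E"
    and "1 \<le> k" and "k \<le> n"
  shows "S_k k (adj_matrix n E) \<le>
     (let m = num_edges n E; \<eta> = nullity n E in
      if k \<le> (n - \<eta>) div 2 then sqrt (real k * real m)
      else if k \<le> (n + \<eta>) div 2 then sqrt (real ((n - \<eta>) div 2) * real m)
      else sqrt (real (n - k) * real m))"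
proof -
  let ?M = "eig_mset (adj_matrix n E)"
  let ?L = "eigenvalues_desc (adj_matrix n E)"
  note spectrum = adj_matrix_spectrum[OF assms(1,2)]
  have L: "mset ?L = ?M" by (simp add: eigenvalues_desc_def)
  have sub: "mset (take k ?L) \<subseteq># ?M"
    unfolding L[symmetric] by (metis append_take_drop_id mset_append mset_subset_eq_add_left)
  have size: "size (mset (take k ?L)) = k"
    using L spectrum(1) assms(4) by (metis length_take min.absorb2 size_mset)
  have "S_k k (adj_matrix n E) = \<Sum>\<^sub># (mset (take k ?L))"
    by (simp add: S_k_def sum_mset_sum_list)
  then show ?thesis
    using sum_submset_symmetric_le[OF spectrum(2,3) sub]
      sum_submset_symmetric_le_complement[OF spectrum(2,3) sub]
    unfolding Let_def nullity_def size spectrum(1) by simp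
qed

end
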